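(* Let $\alpha\in(0,1)$, $T>0$, and $f:[0,T]\times\mathbb{C}^d\to\mathbb{C}^d$ continuous and locally Lipschitz in the second variable: for every $R>0$ there is $M>0$ with $|f(t,x)-f(t,y)|\le M|x-y|$ whenever $|t|\le R$, $|x|\le R$, $|y|\le R$. If $x_1,x_2:[0,T]\to\mathbb{C}^d$ are absolutely continuous, $x_1(0)=x_2(0)=x_0$, and ${}^LD^\alpha x_i(t)=f(t,x_i(t))$ for almost every $t\in[0,T]$ ($i=1,2$), then $x_1=x_2$ on $[0,T]$.
   Context: Absolutely continuous: differentiable a.e., $x'\in L^1[0,T]$, $x(t)=x(0)+\int_0^tx'$. Caputo derivative ${}^CD^\alpha x(t)=\frac{1}{\Gamma(1-\alpha)}\int_0^t (t-\tau)^{-\alpha}x'(\tau)d\tau$; L-fractional derivative ${}^LD^\alpha x(t)=\frac{\Gamma(2-\alpha)}{t^{1-\alpha}}{}^CD^\alpha x(t)$, $t\in(0,T]$. *)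

theory Defs
  imports "HOL-Analysis.Analysis"
begin

definition dx :: "real \<Rightarrow> (real \<Rightarrow> 'a::real_normed_vector) \<Rightarrow> real \<Rightarrow> 'a" where
  "dx T x t = vector_derivative x (at t within {0..T})"

definition abs_cont_on :: "real \<Rightarrow> (real \<Rightarrow> 'a::euclidean_space) \<Rightarrow> bool" where
  "abs_cont_on T x \<longleftrightarrow>
     (AE t in lebesgue. t \<in> {0..T} \<longrightarrow> x differentiable (at t within {0..T})) \<and>
     dx T x absolutely_integrable_on {0..T} \<and>
     (\<forall>t\<in>{0..T}. x t = x 0 + integral {0..t} (dx T x))"

definition caputo :: "real \<Rightarrow> real \<Rightarrow> (real \<Rightarrow> 'a::euclidean_space) \<Rightarrow> real \<Rightarrow> 'a" where
  "caputo T \<alpha> x t = (1 / Gamma (1 - \<alpha>)) *\<^sub>R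
      integral {0..t} (\<lambda>\<tau>. ((t - \<tau>) powr (-\<alpha>)) *\<^sub>R dx T x \<tau>)"

definition Lfrac :: "real \<Rightarrow> real \<Rightarrow> (real \<Rightarrow> 'a::euclidean_space) \<Rightarrow> real \<Rightarrow> 'a" where
  "Lfrac T \<alpha> x t = (Gamma (2 - \<alpha>) / t powr (1 - \<alpha>)) *\<^sub>R caputo T \<alpha> x t"

end

theory Submission imports Defs begin

text \<open>Multiplying the Caputo integral at \<open>s\<close> by \<open>(t - s) powr (\<alpha> - 1)\<close> and integrating over
  \<open>[0, t]\<close> collapses it, by Fubini and the Beta integral
  \<open>\<integral>\<^sub>\<tau>\<^sup>t (s - \<tau>) powr (-\<alpha>) * (t - s) powr (\<alpha> - 1) ds = Beta (1 - \<alpha>) \<alpha>\<close>, to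
  \<open>Beta (1 - \<alpha>) \<alpha> * (x t - x 0)\<close>. Hence a solution of the L-fractional equation solves a Volterra
  equation with the weakly singular kernel \<open>s powr (1 - \<alpha>) * (t - s) powr (\<alpha> - 1)\<close>, and by the local
  Lipschitz bound along the (bounded) solutions their difference \<open>e\<close> satisfies
  \<open>|e t| \<le> C \<integral>\<^sub>0\<^sup>t (t - s) powr (\<alpha> - 1) |e s| ds\<close>. If \<open>e\<close> vanishes on \<open>[0, a]\<close> and
  \<open>C \<delta> powr \<alpha> / \<alpha> \<le> 1/2\<close>, the maximum of \<open>|e|\<close> on \<open>[0, a + \<delta>]\<close> is at most half of itself, so \<open>e\<close>
  vanishes on all of \<open>[0, T]\<close> after finitely many such steps.\<close>

lemma Beta_real_pos: "0 < a \<Longrightarrow> 0 < b \<Longrightarrow> Beta a b > (0::real)"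
  by (simp add: Beta_def Gamma_real_pos)

lemma has_integral_Beta_shifted:
  fixes a b \<tau> t :: real
  assumes a: "a > 0" and b: "b > 0" and \<tau>t: "\<tau> < t"
  shows "((\<lambda>s. (s - \<tau>) powr (a - 1) * (t - s) powr (b - 1))
           has_integral (t - \<tau>) powr (a + b - 1) * Beta a b) {\<tau>..t}"
proof -
  \<comment> \<open>substitute \<open>u = (s - \<tau>) / (t - \<tau>) = m s + c\<close>\<close>
  define m where "m = 1 / (t - \<tau>)"
  define c where "c = - \<tau> / (t - \<tau>)"
  have m: "m > 0" using \<tau>t by (simp add: m_def)
  have "((\<lambda>u. u powr (a - 1) * (1 - u) powr (b - 1)) has_integral Beta a b) (cbox 0 1)"
    using has_integral_Beta_real[OF a b] by simp
  from has_integral_affinity'[OF this m, of c]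
  moreover have "(0 - c) /\<^sub>R m = \<tau>" "(1 - c) /\<^sub>R m = t" "inverse m = t - \<tau>"
    using \<tau>t by (auto simp: m_def c_def field_simps)
  ultimately have "((\<lambda>s. (m * s + c) powr (a - 1) * (1 - (m * s + c)) powr (b - 1))
          has_integral (t - \<tau>) * Beta a b) {\<tau>..t}"
    by simp
  moreover have "(m * s + c) powr (a - 1) * (1 - (m * s + c)) powr (b - 1)
      = (t - \<tau>) powr (2 - a - b) * ((s - \<tau>) powr (a - 1) * (t - s) powr (b - 1))"
    if "s \<in> {\<tau>..t}" for s
  proof -
    have ms: "m * s + c = (s - \<tau>) / (t - \<tau>)"
      by (simp add: m_def c_def diff_divide_distrib)
    have ms': "1 - (m * s + c) = (t - s) / (t - \<tau>)"
      using \<tau>t unfolding ms by (simp add: field_simps)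
    have unit: "(t - \<tau>) powr (2 - a - b) * ((t - \<tau>) powr (a - 1) * (t - \<tau>) powr (b - 1)) = 1"
      using \<tau>t by (simp flip: powr_add)
    show ?thesis
      unfolding ms' unfolding ms using that \<tau>t unit by (simp add: powr_divide field_simps)
  qed
  ultimately have "((\<lambda>s. (t - \<tau>) powr (2 - a - b) * ((s - \<tau>) powr (a - 1) * (t - s) powr (b - 1)))
          has_integral (t - \<tau>) * Beta a b) {\<tau>..t}"
    by (rule has_integral_eq[rotated]) simp
  moreover have "(t - \<tau>) * Beta a b = (t - \<tau>) powr (2 - a - b) * ((t - \<tau>) powr (a + b - 1) * Beta a b)"
    using \<tau>t by (simp add: mult.assoc[symmetric] flip: powr_add)
  ultimately have "((\<lambda>s. (t - \<tau>) powr (2 - a - b) *\<^sub>R ((s - \<tau>) powr (a - 1) * (t - s) powr (b - 1)))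
      has_integral (t - \<tau>) powr (2 - a - b) *\<^sub>R ((t - \<tau>) powr (a + b - 1) * Beta a b)) {\<tau>..t}"
    by simp
  then show ?thesis
    using \<tau>t by (subst (asm) has_integral_cmul_iff) auto
qed

lemma sigma_finite_lebesgue_real: "sigma_finite_measure (lebesgue :: real measure)"
proof
  have "x \<in> (\<Union>n::nat. {-real n..real n})" for x :: real
  proof -
    obtain n :: nat where "\<bar>x\<bar> \<le> real n" using real_arch_simple by blast
    then show ?thesis by (intro UN_I[of n]) auto
  qed
  then show "\<exists>A. countable A \<and> A \<subseteq> sets (lebesgue :: real measure) \<and> \<Union> A = space lebesgue
      \<and> (\<forall>a\<in>A. emeasure lebesgue a \<noteq> \<infinity>)"
    by (intro exI[of _ "range (\<lambda>n::nat. {-real n..real n})"]) auto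
qed

interpretation lebesgue_pair: pair_sigma_finite "lebesgue :: real measure" "lebesgue :: real measure"
  by (simp add: pair_sigma_finite_def sigma_finite_lebesgue_real)

lemma borel_measurable_lborel_pair_imp_lebesgue_pair:
  assumes "f \<in> borel_measurable (lborel \<Otimes>\<^sub>M (lborel :: real measure))"
  shows "f \<in> borel_measurable (lebesgue \<Otimes>\<^sub>M (lebesgue :: real measure))"
proof -
  have "(\<lambda>p. p) \<in> (lebesgue \<Otimes>\<^sub>M (lebesgue :: real measure)) \<rightarrow>\<^sub>M (lborel \<Otimes>\<^sub>M lborel)"
    using measurable_comp[OF measurable_fst measurable_completion[OF measurable_ident_sets[of lborel lborel]]]
      measurable_comp[OF measurable_snd measurable_completion[OF measurable_ident_sets[of lborel lborel]]]
    by (intro measurable_pair) (simp_all add: o_def)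
  from measurable_comp[OF this assms] show ?thesis by (simp add: o_def)
qed

lemma has_integral_AE_eq_lebesgue:
  fixes H G :: "'a::euclidean_space \<Rightarrow> 'b::euclidean_space"
  assumes "integrable lebesgue H" and "AE x in lebesgue. H x = G x"
  shows "(G has_integral (\<integral>x. H x \<partial>lebesgue)) UNIV"
proof -
  have "AE x in lborel. x \<in> UNIV \<longrightarrow> H x = G x"
    using assms(2) by (simp add: AE_completion_iff)
  with has_integral_integral_lebesgue[OF assms(1)] show ?thesis
    using has_integral_AE by blast
qed

definition fractional_kernel :: "real \<Rightarrow> real \<Rightarrow> real \<Rightarrow> real \<Rightarrow> real" where
  "fractional_kernel \<alpha> t \<tau> s =
     (if 0 \<le> \<tau> \<and> \<tau> \<le> s \<and> s \<le> t then (s - \<tau>) powr (-\<alpha>) * (t - s) powr (\<alpha> - 1) else 0)"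

lemma fractional_kernel_nonneg: "fractional_kernel \<alpha> t \<tau> s \<ge> 0"
  by (simp add: fractional_kernel_def)

lemma borel_measurable_fractional_kernel:
  "(\<lambda>p. fractional_kernel \<alpha> t (fst p) (snd p)) \<in> borel_measurable (lebesgue \<Otimes>\<^sub>M lebesgue)"
  by (rule borel_measurable_lborel_pair_imp_lebesgue_pair) (unfold fractional_kernel_def, measurable)

lemma fractional_kernel_integral:
  assumes "0 < \<alpha>" "\<alpha> < 1"
  shows "integrable lebesgue (fractional_kernel \<alpha> t \<tau>) \<and>
    (\<integral>s. fractional_kernel \<alpha> t \<tau> s \<partial>lebesgue) = (if 0 \<le> \<tau> \<and> \<tau> < t then Beta (1 - \<alpha>) \<alpha> else 0)"
proof (cases "0 \<le> \<tau> \<and> \<tau> < t")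
  case True
  let ?\<phi> = "\<lambda>s. (s - \<tau>) powr (-\<alpha>) * (t - s) powr (\<alpha> - 1)"
  have "(?\<phi> has_integral Beta (1 - \<alpha>) \<alpha>) {\<tau>..t}"
    using has_integral_Beta_shifted[of "1 - \<alpha>" \<alpha> \<tau> t] assms True by simp
  moreover from this have "set_integrable lebesgue {\<tau>..t} ?\<phi>"
    by (intro nonnegative_absolutely_integrable_1) auto
  moreover have "fractional_kernel \<alpha> t \<tau> = (\<lambda>s. indicator {\<tau>..t} s *\<^sub>R ?\<phi> s)"
    using True by (auto simp: fractional_kernel_def indicator_def fun_eq_iff)
  ultimately show ?thesis
    using True set_lebesgue_integral_eq_integral(2)[of "{\<tau>..t}" ?\<phi>]
    by (simp add: set_integrable_def set_lebesgue_integral_def integral_unique)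
next
  case False
  then have "fractional_kernel \<alpha> t \<tau> = (\<lambda>s. 0)"
    by (force simp: fractional_kernel_def fun_eq_iff)
  then show ?thesis using False by auto
qed

lemma integrable_fractional_kernel_product:
  fixes g :: "real \<Rightarrow> 'a::euclidean_space"
  assumes \<alpha>: "0 < \<alpha>" "\<alpha> < 1" and g: "integrable lebesgue g"
  shows "integrable (lebesgue \<Otimes>\<^sub>M lebesgue) (\<lambda>(\<tau>, s). fractional_kernel \<alpha> t \<tau> s *\<^sub>R g \<tau>)"
proof (rule lebesgue_pair.Fubini_integrable)
  have "(\<lambda>p. g (fst p)) \<in> borel_measurable (lebesgue \<Otimes>\<^sub>M lebesgue)"
    using measurable_comp[OF measurable_fst borel_measurable_integrable[OF g]] by (simp add: o_def)
  from borel_measurable_scaleR[OF borel_measurable_fractional_kernel this]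
  show "(\<lambda>(\<tau>, s). fractional_kernel \<alpha> t \<tau> s *\<^sub>R g \<tau>) \<in> borel_measurable (lebesgue \<Otimes>\<^sub>M lebesgue)"
    by (simp add: split_beta')
  have "(\<lambda>\<tau>. \<integral>s. norm (fractional_kernel \<alpha> t \<tau> s *\<^sub>R g \<tau>) \<partial>lebesgue)
      = (\<lambda>\<tau>. Beta (1 - \<alpha>) \<alpha> * norm (g \<tau>) * indicator {0..<t} \<tau>)"
    using fractional_kernel_integral[OF \<alpha>] fractional_kernel_nonneg
    by (auto simp: indicator_def fun_eq_iff)
  moreover have "integrable lebesgue (\<lambda>\<tau>. Beta (1 - \<alpha>) \<alpha> * norm (g \<tau>) * indicator {0..<t} \<tau>)"
    using g by (intro integrable_real_mult_indicator integrable_mult_right integrable_norm) auto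
  ultimately show "integrable lebesgue (\<lambda>\<tau>. \<integral>s. norm (case_prod (\<lambda>\<tau> s. fractional_kernel \<alpha> t \<tau> s *\<^sub>R g \<tau>) (\<tau>, s)) \<partial>lebesgue)"
    by simp
  show "AE \<tau> in lebesgue. integrable lebesgue (\<lambda>s. case_prod (\<lambda>\<tau> s. fractional_kernel \<alpha> t \<tau> s *\<^sub>R g \<tau>) (\<tau>, s))"
    using fractional_kernel_integral[OF \<alpha>] by (auto intro!: integrable_scaleR_left)
qed

lemma integral_fractional_kernel_fst:
  fixes g :: "real \<Rightarrow> 'a::euclidean_space"
  assumes "integrable lebesgue (\<lambda>\<tau>. fractional_kernel \<alpha> t \<tau> s *\<^sub>R g \<tau>)"
  shows "(\<integral>\<tau>. fractional_kernel \<alpha> t \<tau> s *\<^sub>R g \<tau> \<partial>lebesgue)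
    = (if 0 \<le> s \<and> s < t then (t - s) powr (\<alpha> - 1) *\<^sub>R integral {0..s} (\<lambda>\<tau>. (s - \<tau>) powr (-\<alpha>) *\<^sub>R g \<tau>) else 0)"
proof (cases "0 \<le> s \<and> s < t")
  case True
  define c where "c = (t - s) powr (\<alpha> - 1)"
  have c: "c > 0" using True by (simp add: c_def)
  have eq: "fractional_kernel \<alpha> t \<tau> s *\<^sub>R g \<tau> = c *\<^sub>R (indicator {0..s} \<tau> *\<^sub>R ((s - \<tau>) powr (-\<alpha>) *\<^sub>R g \<tau>))" for \<tau>
    using True by (auto simp: fractional_kernel_def c_def indicator_def)
  have si: "set_integrable lebesgue {0..s} (\<lambda>\<tau>. (s - \<tau>) powr (-\<alpha>) *\<^sub>R g \<tau>)"
    using integrable_scaleR_right[OF assms, of "1 / c"] c by (simp add: eq set_integrable_def)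
  have "(\<integral>\<tau>. fractional_kernel \<alpha> t \<tau> s *\<^sub>R g \<tau> \<partial>lebesgue)
      = c *\<^sub>R (\<integral>\<tau>. indicator {0..s} \<tau> *\<^sub>R ((s - \<tau>) powr (-\<alpha>) *\<^sub>R g \<tau>) \<partial>lebesgue)"
    unfolding eq by (rule integral_scaleR_right)
  with set_lebesgue_integral_eq_integral(2)[OF si] show ?thesis
    using True by (simp add: c_def set_lebesgue_integral_def)
next
  case False
  then have "fractional_kernel \<alpha> t \<tau> s = 0" for \<tau>
    by (auto simp: fractional_kernel_def)
  then show ?thesis using False by auto
qed

lemma fractional_integral_composition:
  fixes g :: "real \<Rightarrow> 'a::euclidean_space"
  assumes \<alpha>: "0 < \<alpha>" "\<alpha> < 1" and g: "g absolutely_integrable_on {0..t}"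
  shows "((\<lambda>s. (t - s) powr (\<alpha> - 1) *\<^sub>R integral {0..s} (\<lambda>\<tau>. (s - \<tau>) powr (-\<alpha>) *\<^sub>R g \<tau>))
           has_integral Beta (1 - \<alpha>) \<alpha> *\<^sub>R integral {0..t} g) {0..t}"
proof -
  define g0 where "g0 \<tau> = indicator {0..t} \<tau> *\<^sub>R g \<tau>" for \<tau>
  have g0: "integrable lebesgue g0" using g by (simp add: set_integrable_def g0_def[abs_def])
  define F where "F \<tau> s = fractional_kernel \<alpha> t \<tau> s *\<^sub>R g0 \<tau>" for \<tau> s
  have F: "integrable (lebesgue \<Otimes>\<^sub>M lebesgue) (case_prod F)"
    unfolding F_def using integrable_fractional_kernel_product[OF \<alpha> g0] by simp
  define G where "G s = (if s \<in> {0..t} then (t - s) powr (\<alpha> - 1) *\<^sub>R integral {0..s} (\<lambda>\<tau>. (s - \<tau>) powr (-\<alpha>) *\<^sub>R g \<tau>) else 0)" for s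
  have "AE s in lebesgue. (\<integral>\<tau>. F \<tau> s \<partial>lebesgue) = G s"
    using lebesgue_pair.AE_integrable_snd[OF F]
  proof eventually_elim
    case (elim s)
    have "integral {0..s} (\<lambda>\<tau>. (s - \<tau>) powr (-\<alpha>) *\<^sub>R g0 \<tau>) = integral {0..s} (\<lambda>\<tau>. (s - \<tau>) powr (-\<alpha>) *\<^sub>R g \<tau>)"
      if "s \<le> t" using that by (intro integral_cong) (auto simp: g0_def)
    with integral_fractional_kernel_fst[OF elim[unfolded F_def]] show ?case
      by (auto simp: F_def G_def)
  qed
  from has_integral_AE_eq_lebesgue[OF lebesgue_pair.integrable_snd[OF F] this]
  have "(G has_integral (\<integral>\<tau>. (\<integral>s. F \<tau> s \<partial>lebesgue) \<partial>lebesgue)) UNIV"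
    by (simp add: lebesgue_pair.Fubini_integral[OF F])
  moreover have "(\<integral>\<tau>. (\<integral>s. F \<tau> s \<partial>lebesgue) \<partial>lebesgue) = (\<integral>\<tau>. Beta (1 - \<alpha>) \<alpha> *\<^sub>R g0 \<tau> \<partial>lebesgue)"
  proof (rule integral_cong_AE)
    show "(\<lambda>\<tau>. \<integral>s. F \<tau> s \<partial>lebesgue) \<in> borel_measurable lebesgue"
      using lebesgue_pair.integrable_fst[OF F] by (rule borel_measurable_integrable)
    show "(\<lambda>\<tau>. Beta (1 - \<alpha>) \<alpha> *\<^sub>R g0 \<tau>) \<in> borel_measurable lebesgue"
      using borel_measurable_integrable[OF g0] by measurable
    have "{t} \<in> null_sets lebesgue" by simp
    then show "AE \<tau> in lebesgue. (\<integral>s. F \<tau> s \<partial>lebesgue) = Beta (1 - \<alpha>) \<alpha> *\<^sub>R g0 \<tau>"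
      by (rule AE_I') (use fractional_kernel_integral[OF \<alpha>] in \<open>auto simp: F_def g0_def indicator_def integral_scaleR_left\<close>)
  qed
  moreover have "(\<integral>\<tau>. g0 \<tau> \<partial>lebesgue) = integral {0..t} g"
    using set_lebesgue_integral_eq_integral(2)[OF g] by (simp add: set_lebesgue_integral_def g0_def[abs_def])
  ultimately have "(G has_integral Beta (1 - \<alpha>) \<alpha> *\<^sub>R integral {0..t} g) UNIV"
    by simp
  then show ?thesis
    by (simp only: G_def[abs_def] has_integral_restrict_UNIV)
qed

lemma abs_cont_onD:
  assumes "abs_cont_on T x"
  shows "dx T x absolutely_integrable_on {0..T}"
    and "t \<in> {0..T} \<Longrightarrow> integral {0..t} (dx T x) = x t - x 0"
  using assms unfolding abs_cont_on_def by (metis add_diff_cancel_left')+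

lemma abs_cont_on_imp_continuous_on:
  fixes x :: "real \<Rightarrow> 'a::euclidean_space"
  assumes "abs_cont_on T x"
  shows "continuous_on {0..T} x"
proof -
  have "continuous_on {0..T} (\<lambda>t. x 0 + integral {0..t} (dx T x))"
    using abs_cont_onD(1)[OF assms]
    by (intro continuous_intros indefinite_integral_continuous_1 set_lebesgue_integral_eq_integral(1))
  then show ?thesis
    by (rule continuous_on_eq) (simp add: abs_cont_onD(2)[OF assms])
qed

lemma caputo_integral_of_Lfrac:
  assumes "\<alpha> < 1" "s > 0" "Lfrac T \<alpha> x s = v"
  shows "integral {0..s} (\<lambda>\<tau>. (s - \<tau>) powr (-\<alpha>) *\<^sub>R dx T x \<tau>)
    = (Gamma (1 - \<alpha>) / Gamma (2 - \<alpha>) * s powr (1 - \<alpha>)) *\<^sub>R v"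
proof -
  have pos: "Gamma (1 - \<alpha>) > 0" "Gamma (2 - \<alpha>) > 0" "s powr (1 - \<alpha>) > 0"
    using assms by auto
  then have "Gamma (1 - \<alpha>) / Gamma (2 - \<alpha>) * s powr (1 - \<alpha>)
      * (Gamma (2 - \<alpha>) / s powr (1 - \<alpha>) * (1 / Gamma (1 - \<alpha>))) = 1"
    by (simp add: field_simps)
  then show ?thesis
    unfolding assms(3)[symmetric] Lfrac_def caputo_def scaleR_scaleR using pos by simp
qed

definition Lfrac_kernel :: "real \<Rightarrow> real \<Rightarrow> real \<Rightarrow> real" where
  "Lfrac_kernel \<alpha> t s =
     Gamma (1 - \<alpha>) / (Gamma (2 - \<alpha>) * Beta (1 - \<alpha>) \<alpha>) * s powr (1 - \<alpha>) * (t - s) powr (\<alpha> - 1)"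

lemma Lfrac_integral_equation:
  fixes x :: "real \<Rightarrow> 'a::euclidean_space" and f :: "real \<Rightarrow> 'a \<Rightarrow> 'a"
  assumes \<alpha>: "0 < \<alpha>" "\<alpha> < 1" and x: "abs_cont_on T x"
    and eq: "AE s in lebesgue. s \<in> {0<..T} \<longrightarrow> Lfrac T \<alpha> x s = f s (x s)"
    and t: "t \<in> {0..T}"
  shows "((\<lambda>s. Lfrac_kernel \<alpha> t s *\<^sub>R f s (x s)) has_integral x t - x 0) {0..t}"
proof -
  define B where "B = Beta (1 - \<alpha>) \<alpha>"
  have B: "B > 0" using \<alpha> by (simp add: B_def Beta_real_pos)
  have "dx T x absolutely_integrable_on {0..t}"
    by (rule set_integrable_subset[OF abs_cont_onD(1)[OF x]]) (use t in auto)
  moreover have "integral {0..t} (dx T x) = x t - x 0"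
    using abs_cont_onD(2)[OF x t] .
  ultimately have composed: "((\<lambda>s. (t - s) powr (\<alpha> - 1) *\<^sub>R integral {0..s} (\<lambda>\<tau>. (s - \<tau>) powr (-\<alpha>) *\<^sub>R dx T x \<tau>))
      has_integral B *\<^sub>R (x t - x 0)) {0..t}"
    using fractional_integral_composition[OF \<alpha>, where g = "dx T x" and t = t] by (simp add: B_def)
  have "AE s in lborel. s \<in> {0..t} \<longrightarrow>
      (t - s) powr (\<alpha> - 1) *\<^sub>R integral {0..s} (\<lambda>\<tau>. (s - \<tau>) powr (-\<alpha>) *\<^sub>R dx T x \<tau>)
      = B *\<^sub>R (Lfrac_kernel \<alpha> t s *\<^sub>R f s (x s))"
    using eq[unfolded AE_completion_iff] AE_lborel_singleton[of 0]
  proof eventually_elim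
    case (elim s)
    show ?case
    proof
      assume "s \<in> {0..t}"
      with elim t have "s > 0" "Lfrac T \<alpha> x s = f s (x s)" by auto
      from caputo_integral_of_Lfrac[OF \<alpha>(2) this]
      show "(t - s) powr (\<alpha> - 1) *\<^sub>R integral {0..s} (\<lambda>\<tau>. (s - \<tau>) powr (-\<alpha>) *\<^sub>R dx T x \<tau>)
          = B *\<^sub>R (Lfrac_kernel \<alpha> t s *\<^sub>R f s (x s))"
        using B by (simp add: Lfrac_kernel_def B_def)
    qed
  qed
  from composed has_integral_AE[OF this]
  have "((\<lambda>s. B *\<^sub>R (Lfrac_kernel \<alpha> t s *\<^sub>R f s (x s))) has_integral B *\<^sub>R (x t - x 0)) {0..t}"
    by simp
  then show ?thesis
    using B by (subst (asm) has_integral_cmul_iff) auto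
qed

lemma abs_Lfrac_kernel_le:
  assumes "0 < \<alpha>" "\<alpha> < 1" "0 \<le> s" "s \<le> t" "t \<le> T"
  shows "\<bar>Lfrac_kernel \<alpha> t s\<bar>
    \<le> Gamma (1 - \<alpha>) / (Gamma (2 - \<alpha>) * Beta (1 - \<alpha>) \<alpha>) * T powr (1 - \<alpha>) * (t - s) powr (\<alpha> - 1)"
proof -
  define c where "c = Gamma (1 - \<alpha>) / (Gamma (2 - \<alpha>) * Beta (1 - \<alpha>) \<alpha>)"
  have "c > 0" using assms by (simp add: c_def Beta_real_pos)
  moreover have "s powr (1 - \<alpha>) \<le> T powr (1 - \<alpha>)"
    using assms by (intro powr_mono2) auto
  ultimately have "c * s powr (1 - \<alpha>) * (t - s) powr (\<alpha> - 1) \<le> c * T powr (1 - \<alpha>) * (t - s) powr (\<alpha> - 1)"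
    by (intro mult_right_mono mult_left_mono) auto
  with \<open>c > 0\<close> show ?thesis
    by (simp add: Lfrac_kernel_def abs_mult flip: c_def)
qed

lemma has_integral_powr_from_right:
  assumes "b > -1" "a \<le> t"
  shows "((\<lambda>s::real. (t - s) powr b) has_integral (t - a) powr (b + 1) / (b + 1)) {a..t}"
proof -
  have "((\<lambda>u::real. u powr b) has_integral (t - a) powr (b + 1) / (b + 1)) (cbox 0 (t - a))"
    using has_integral_powr_from_0[OF assms(1), of "t - a"] assms by simp
  from has_integral_affinity[OF this, of "-1" t]
  have "((\<lambda>u. ((-1) *\<^sub>R u + t) powr b) has_integral (t - a) powr (b + 1) / (b + 1))
      ((\<lambda>u. (1 / -1) *\<^sub>R u + - ((1 / -1) *\<^sub>R t)) ` cbox (0::real) (t - a))"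
    by simp
  moreover have "(\<lambda>u::real. (1 / -1) *\<^sub>R u + - ((1 / -1) *\<^sub>R t)) ` cbox 0 (t - a) = {a..t}"
    by (auto simp: image_iff intro!: bexI[where x="t - _"])
  ultimately show ?thesis by simp
qed

context
  fixes \<alpha> C T :: real and e :: "real \<Rightarrow> 'a::euclidean_space" and F :: "real \<Rightarrow> real \<Rightarrow> 'a"
  assumes \<alpha>: "0 < \<alpha>" and C: "0 < C"
    and e_continuous: "continuous_on {0..T} e"
    and F_integral: "\<And>t. t \<in> {0..T} \<Longrightarrow> (F t has_integral e t) {0..t}"
    and F_bound: "\<And>t s. t \<in> {0..T} \<Longrightarrow> s \<in> {0..t} \<Longrightarrow> norm (F t s) \<le> C * (t - s) powr (\<alpha> - 1) * norm (e s)"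
begin

lemma singular_Volterra_estimate:
  assumes t: "t \<in> {0..T}" and a: "0 \<le> a" "a \<le> t"
    and vanish: "\<And>s. s \<in> {0..a} \<Longrightarrow> e s = 0"
    and m: "\<And>s. s \<in> {a..t} \<Longrightarrow> norm (e s) \<le> m"
  shows "norm (e t) \<le> C * m * (t - a) powr \<alpha> / \<alpha>"
proof -
  have "norm (e t) \<le> m" using m a by simp
  then have m0: "0 \<le> m" by (rule order_trans[OF norm_ge_zero])
  define \<psi> where "\<psi> s = (if s \<in> {a..t} then C * m * (t - s) powr (\<alpha> - 1) else 0)" for s
  have "((\<lambda>s. C * m * (t - s) powr (\<alpha> - 1)) has_integral C * m * ((t - a) powr \<alpha> / \<alpha>)) {a..t}"
    using has_integral_mult_right[OF has_integral_powr_from_right[of "\<alpha> - 1" a t], of "C * m"] \<alpha> a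
    by simp
  then have \<psi>: "(\<psi> has_integral C * m * ((t - a) powr \<alpha> / \<alpha>)) {0..t}"
    unfolding \<psi>_def using a by (subst has_integral_restrict) auto
  have "norm (F t s) \<le> \<psi> s" if s: "s \<in> {0..t}" for s
  proof (cases "s \<le> a")
    case True
    then have "norm (F t s) \<le> 0" using F_bound[OF t s] vanish s by simp
    then show ?thesis using C m0 by (simp add: \<psi>_def)
  next
    case False
    have "norm (F t s) \<le> C * (t - s) powr (\<alpha> - 1) * norm (e s)" by (rule F_bound[OF t s])
    also have "\<dots> \<le> C * (t - s) powr (\<alpha> - 1) * m" using C False s m by (intro mult_left_mono) auto
    finally show ?thesis using False s by (simp add: \<psi>_def mult_ac)
  qed
  then have "norm (integral {0..t} (F t)) \<le> integral {0..t} \<psi>"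
    using F_integral[OF t] \<psi> by (intro integral_norm_bound_integral) auto
  then show ?thesis
    using integral_unique[OF F_integral[OF t]] integral_unique[OF \<psi>] by simp
qed

lemma singular_Volterra_extend:
  assumes \<delta>: "0 < \<delta>" "C * \<delta> powr \<alpha> / \<alpha> \<le> 1 / 2" and a: "0 \<le> a"
    and vanish: "\<And>s. s \<in> {0..T} \<Longrightarrow> s \<le> a \<Longrightarrow> e s = 0"
    and s: "s \<in> {0..T}" "s \<le> a + \<delta>"
  shows "e s = 0"
proof -
  define b where "b = min T (a + \<delta>)"
  have "continuous_on {0..b} (\<lambda>s. norm (e s))"
    by (intro continuous_on_norm continuous_on_subset[OF e_continuous]) (auto simp: b_def)
  then obtain tm where tm: "tm \<in> {0..b}" and max: "\<And>y. y \<in> {0..b} \<Longrightarrow> norm (e y) \<le> norm (e tm)"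
    using continuous_attains_sup[of "{0..b}" "\<lambda>s. norm (e s)"] s by (auto simp: b_def)
  have "norm (e tm) = 0"
  proof (cases "tm \<le> a")
    case True
    then show ?thesis using vanish tm by (simp add: b_def)
  next
    case False
    have "norm (e tm) \<le> C * norm (e tm) * (tm - a) powr \<alpha> / \<alpha>"
      by (rule singular_Volterra_estimate) (use tm False a vanish max in \<open>auto simp: b_def\<close>)
    also have "\<dots> \<le> C * norm (e tm) * \<delta> powr \<alpha> / \<alpha>"
      using tm C \<alpha> False by (intro divide_right_mono mult_left_mono powr_mono2) (auto simp: b_def)
    also have "\<dots> \<le> norm (e tm) / 2"
      using mult_right_mono[OF \<delta>(2) norm_ge_zero[of "e tm"]] by (simp add: mult_ac)
    finally show ?thesis by simp
  qed
  then show "e s = 0" using max[of s] s by (simp add: b_def)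
qed

lemma singular_Volterra_vanishes:
  assumes t: "t \<in> {0..T}"
  shows "e t = 0"
proof -
  define \<delta> where "\<delta> = (\<alpha> / (2 * C)) powr (1 / \<alpha>)"
  have \<delta>: "0 < \<delta>" "C * \<delta> powr \<alpha> / \<alpha> \<le> 1 / 2"
    using \<alpha> C by (simp_all add: \<delta>_def powr_powr)
  have "e s = 0" if "s \<in> {0..T}" "s \<le> real n * \<delta>" for n s
    using that
  proof (induction n arbitrary: s)
    case 0
    then have "(F 0 has_integral e 0) {0}" using F_integral[of 0] by simp
    then show ?case using 0 has_integral_unique[OF _ has_integral_refl(2)] by auto
  next
    case (Suc n)
    then show ?case
      using singular_Volterra_extend[OF \<delta>, of "real n * \<delta>"] \<delta>(1) by (simp add: algebra_simps)
  qed
  moreover obtain n :: nat where "t / \<delta> \<le> real n" using real_arch_simple by blast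
  ultimately show ?thesis using t \<delta>(1) by (simp add: divide_le_eq mult.commute)
qed

end

lemma locally_lipschitz_along_continuous:
  fixes f :: "real \<Rightarrow> 'a::real_normed_vector \<Rightarrow> 'b::real_normed_vector"
  assumes lip: "\<forall>R>0. \<exists>M>0. \<forall>t\<in>{0..T}. \<forall>x y. \<bar>t\<bar> \<le> R \<and> norm x \<le> R \<and> norm y \<le> R
      \<longrightarrow> norm (f t x - f t y) \<le> M * norm (x - y)"
    and x1: "continuous_on {0..T} x1" and x2: "continuous_on {0..T} x2"
  obtains L where "L > 0" "\<And>s. s \<in> {0..T} \<Longrightarrow> norm (f s (x1 s) - f s (x2 s)) \<le> L * norm (x1 s - x2 s)"
proof -
  have "bounded (x1 ` {0..T})" "bounded (x2 ` {0..T})"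
    using x1 x2 by (simp_all add: compact_imp_bounded compact_continuous_image)
  then obtain B1 B2 where B1: "\<forall>y\<in>x1 ` {0..T}. norm y \<le> B1" and B2: "\<forall>y\<in>x2 ` {0..T}. norm y \<le> B2"
    unfolding bounded_iff by blast
  define R where "R = max \<bar>T\<bar> (max B1 B2) + 1"
  have "R > 0" by (simp add: R_def)
  then obtain L where L_pos: "L > 0" and L: "\<forall>t\<in>{0..T}. \<forall>x y. \<bar>t\<bar> \<le> R \<and> norm x \<le> R \<and> norm y \<le> R
      \<longrightarrow> norm (f t x - f t y) \<le> L * norm (x - y)"
    using lip by blast
  have "norm (f s (x1 s) - f s (x2 s)) \<le> L * norm (x1 s - x2 s)" if s: "s \<in> {0..T}" for s
  proof -
    have "norm (x1 s) \<le> B1" "norm (x2 s) \<le> B2" using s B1 B2 by auto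
    then have "\<bar>s\<bar> \<le> R" "norm (x1 s) \<le> R" "norm (x2 s) \<le> R"
      using s by (auto simp: R_def)
    with L s show ?thesis by blast
  qed
  with L_pos show ?thesis by (rule that)
qed

theorem mainTheorem15:
  fixes \<alpha> T :: real
    and f :: "real \<Rightarrow> complex ^ 'd \<Rightarrow> complex ^ 'd"
    and x1 x2 :: "real \<Rightarrow> complex ^ 'd"
    and x0 :: "complex ^ 'd"
  assumes "0 < \<alpha>" "\<alpha> < 1" "0 < T"
    and "continuous_on ({0..T} \<times> UNIV) (\<lambda>(t, x). f t x)"
    and "\<forall>R>0. \<exists>M>0. \<forall>t\<in>{0..T}. \<forall>x y. \<bar>t\<bar> \<le> R \<and> norm x \<le> R \<and> norm y \<le> R
            \<longrightarrow> norm (f t x - f t y) \<le> M * norm (x - y)"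
    and "abs_cont_on T x1" "abs_cont_on T x2"
    and "x1 0 = x0" "x2 0 = x0"
    and "AE t in lebesgue. t \<in> {0<..T} \<longrightarrow> Lfrac T \<alpha> x1 t = f t (x1 t)"
    and "AE t in lebesgue. t \<in> {0<..T} \<longrightarrow> Lfrac T \<alpha> x2 t = f t (x2 t)"
  shows "\<forall>t\<in>{0..T}. x1 t = x2 t"
proof -
  \<comment> \<open>Continuity of \<open>f\<close> (assumption 4) is only needed for existence, not for uniqueness.\<close>
  note \<alpha> = assms(1,2)
  have x1: "continuous_on {0..T} x1" and x2: "continuous_on {0..T} x2"
    using assms(6,7) by (simp_all add: abs_cont_on_imp_continuous_on)
  obtain L where L: "L > 0" "\<And>s. s \<in> {0..T} \<Longrightarrow> norm (f s (x1 s) - f s (x2 s)) \<le> L * norm (x1 s - x2 s)"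
    using locally_lipschitz_along_continuous[OF assms(5) x1 x2] by blast
  define \<kappa> where "\<kappa> = Gamma (1 - \<alpha>) / (Gamma (2 - \<alpha>) * Beta (1 - \<alpha>) \<alpha>) * T powr (1 - \<alpha>)"
  have \<kappa>: "\<kappa> > 0" using \<alpha> assms(3) by (simp add: \<kappa>_def Beta_real_pos)
  have "x1 t - x2 t = 0" if "t \<in> {0..T}" for t
  proof (rule singular_Volterra_vanishes[OF \<alpha>(1), where C = "\<kappa> * L" and T = T and t = t
        and F = "\<lambda>t s. Lfrac_kernel \<alpha> t s *\<^sub>R (f s (x1 s) - f s (x2 s))"])
    fix t assume t: "t \<in> {0..T}"
    show "((\<lambda>s. Lfrac_kernel \<alpha> t s *\<^sub>R (f s (x1 s) - f s (x2 s))) has_integral x1 t - x2 t) {0..t}"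
      using has_integral_diff[OF Lfrac_integral_equation[where f = f, OF \<alpha> assms(6,10) t]
          Lfrac_integral_equation[where f = f, OF \<alpha> assms(7,11) t]]
      by (simp add: assms(8,9) scaleR_diff_right)
    fix s assume s: "s \<in> {0..t}"
    have "\<bar>Lfrac_kernel \<alpha> t s\<bar> \<le> \<kappa> * (t - s) powr (\<alpha> - 1)"
      using abs_Lfrac_kernel_le[OF \<alpha>, of s t T] s t by (simp add: \<kappa>_def)
    moreover have "norm (f s (x1 s) - f s (x2 s)) \<le> L * norm (x1 s - x2 s)"
      using L(2)[of s] s t by simp
    ultimately have "\<bar>Lfrac_kernel \<alpha> t s\<bar> * norm (f s (x1 s) - f s (x2 s))
        \<le> (\<kappa> * (t - s) powr (\<alpha> - 1)) * (L * norm (x1 s - x2 s))"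
      using \<kappa> by (intro mult_mono) auto
    then show "norm (Lfrac_kernel \<alpha> t s *\<^sub>R (f s (x1 s) - f s (x2 s)))
        \<le> \<kappa> * L * (t - s) powr (\<alpha> - 1) * norm (x1 s - x2 s)"
      by (simp add: mult_ac)
  qed (use that \<kappa> L x1 x2 in \<open>auto intro: continuous_on_diff\<close>)
  then show ?thesis by simp
qed

end
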